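(* Let $\Gamma=(G,\sigma)$ be a signed graph with edge weight $w$, vertex measure $\mu$ and potential $\kappa\ge 0$. Let $1\le p\le q$. Then for every $f\in\mathcal S_q$, $$2^{-p}\mathcal R_p^\sigma(\phi_{q,p}(f))\ \ge\ 2^{-q}\mathcal R_q^\sigma(f)\quad\text{and}\quad p\left(\frac{\mathcal R_p^\sigma(\phi_{q,p}(f))}{\mathcal D}\right)^{1/p}\le q\left(\frac{\mathcal R_q^\sigma(f)}{\mathcal D}\right)^{1/q},$$ where $\mathcal D:=\max_{1\le i\le n}\frac{2\kappa_i+\sum_{j\sim i}w_{ij}}{2\mu_i}$.
   Context: $G=(V,E)$ is a finite undirected graph without self-loops, $V=\{1,\dots,n\}$, $i\sim j$ means $\{i,j\}\in E$. A signed graph $\Gamma=(G,\sigma)$ has signature $\sigma:E\to\{\pm1\}$, $\sigma_{ij}=\sigma(\{i,j\})$, edge weight $w:E\to(0,\infty)$, vertex measure $\mu:V\to(0,\infty)$, potential $\kappa:V\to\mathbb R$. For $p\ge1$ and nonzero $f:V\to\mathbb R$, $\mathcal R_p^\sigma(f)=\frac{\sum_{\{i,j\}\in E}w_{ij}|f(i)-\sigma_{ij}f(j)|^p+\sum_i\kappa_i|f(i)|^p}{\sum_i\mu_i|f(i)|^p}$, and $\mathcal S_p=\{f:\sum_i\mu_i|f(i)|^p=1\}$. For $p,q\ge1$, $\phi_{q,p}:\mathcal S_q\to\mathcal S_p$ is defined by $\phi_{q,p}(f)(i)=|f(i)|^{q/p}\operatorname{sign}(f(i))$ for each $i$ (with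 $\operatorname{sign}(0)=0$). *)

theory Defs
  imports Complex_Main
begin

text \<open>Edges are unordered pairs, enumerated once as (i,j)
with i < j.\<close>

definition edges :: "nat \<Rightarrow> (nat \<Rightarrow> nat \<Rightarrow> bool) \<Rightarrow> (nat \<times> nat) set" where
  "edges n adj = {(i,j). i \<in> {1..n} \<and> j \<in> {1..n} \<and> i < j \<and> adj i j}"

definition signed_graph ::
  "nat \<Rightarrow> (nat \<Rightarrow> nat \<Rightarrow> bool) \<Rightarrow> (nat \<Rightarrow> nat \<Rightarrow> real) \<Rightarrow> (nat \<Rightarrow> nat \<Rightarrow> real)
   \<Rightarrow> (nat \<Rightarrow> real) \<Rightarrow> bool" where
  "signed_graph n adj sigma w mu \<longleftrightarrow>
     (\<forall>i\<in>{1..n}. \<not> adj i i) \<and>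
     (\<forall>i\<in>{1..n}. \<forall>j\<in>{1..n}. adj i j \<longrightarrow>
        adj j i \<and> sigma i j = sigma j i \<and> sigma i j \<in> {-1, 1} \<and> w i j = w j i \<and> w i j > 0) \<and>
     (\<forall>i\<in>{1..n}. mu i > 0)"

definition rayleigh ::
  "nat \<Rightarrow> (nat \<Rightarrow> nat \<Rightarrow> bool) \<Rightarrow> (nat \<Rightarrow> nat \<Rightarrow> real) \<Rightarrow> (nat \<Rightarrow> nat \<Rightarrow> real)
   \<Rightarrow> (nat \<Rightarrow> real) \<Rightarrow> (nat \<Rightarrow> real) \<Rightarrow> real \<Rightarrow> (nat \<Rightarrow> real) \<Rightarrow> real" where
  "rayleigh n adj sigma w mu kappa p f =
     ((\<Sum>(i,j)\<in>edges n adj. w i j * \<bar>f i - sigma i j * f j\<bar> powr p)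
        + (\<Sum>i\<in>{1..n}. kappa i * \<bar>f i\<bar> powr p))
     / (\<Sum>i\<in>{1..n}. mu i * \<bar>f i\<bar> powr p)"

definition sphere_p :: "nat \<Rightarrow> (nat \<Rightarrow> real) \<Rightarrow> real \<Rightarrow> (nat \<Rightarrow> real) set" where
  "sphere_p n mu p = {f. (\<Sum>i\<in>{1..n}. mu i * \<bar>f i\<bar> powr p) = 1}"

definition phi :: "real \<Rightarrow> real \<Rightarrow> (nat \<Rightarrow> real) \<Rightarrow> (nat \<Rightarrow> real)" where
  "phi q p f = (\<lambda>i. \<bar>f i\<bar> powr (q / p) * sgn (f i))"

definition Dconst ::
  "nat \<Rightarrow> (nat \<Rightarrow> nat \<Rightarrow> bool) \<Rightarrow> (nat \<Rightarrow> nat \<Rightarrow> real) \<Rightarrow> (nat \<Rightarrow> real) \<Rightarrow> (nat \<Rightarrow> real) \<Rightarrow> real" where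
  "Dconst n adj w mu kappa =
     Max ((\<lambda>i. (2 * kappa i + (\<Sum>j\<in>{j\<in>{1..n}. adj i j}. w i j)) / (2 * mu i)) ` {1..n})"

end

theory Submission
  imports Defs "HOL-Analysis.Convex"
begin

text \<open>Write \<open>r = q / p\<close>, so that \<open>phi q p f\<close> applies the odd power \<open>x \<mapsto> |x|^r sgn x\<close> to
  every value of \<open>f\<close>; it maps \<open>S_q\<close> into \<open>S_p\<close> and leaves the potential term unchanged, so both
  claims reduce to estimates on single edges. The first one is convexity:
  \<open>(|a - b| / 2)^r \<le> |phi a - phi b| / 2\<close>. For the second, \<open>|phi a - phi b| \<le> r |a - b| M^(r-1)\<close>,
  where \<open>M\<close> is the \<open>q\<close>-power mean of \<open>|a|\<close> and \<open>|b|\<close>. Raising this to the power \<open>p\<close> and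
  applying Hoelder's inequality with exponents \<open>q / p\<close> and \<open>q / (q - p)\<close> bounds \<open>R_p(phi f)\<close> by
  \<open>(q/p)^p R_q(f)^(p/q)\<close> times the power \<open>1 - p/q\<close> of
  \<open>\<Sum>(i,j). w i j (|f i|^q + |f j|^q) / 2 + \<Sum>i. kappa i |f i|^q\<close>, and this last quantity is at
  most \<open>D\<close> because \<open>f\<close> is normalised. Taking \<open>p\<close>-th roots gives the second claim.\<close>

section \<open>Elementary inequalities for real powers\<close>

lemma powr_geometric_le_arithmetic:
  fixes u v a :: real
  assumes "0 \<le> u" "0 \<le> v" "0 \<le> a" "a \<le> 1"
  shows "u powr a * v powr (1 - a) \<le> a * u + (1 - a) * v"
proof (cases "u = 0 \<or> v = 0")
  case True
  then show ?thesis using assms by auto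
next
  case False
  then show ?thesis using Youngs_inequality_0[of a "1 - a" u v] assms by auto
qed

lemma powr_le_tangent_of_concave:
  fixes s m t :: real
  assumes "0 \<le> s" "s \<le> 1" "0 < m" "0 \<le> t"
  shows "t powr s \<le> m powr s + s * m powr (s - 1) * (t - m)"
proof -
  have "t powr s * m powr (1 - s) \<le> s * t + (1 - s) * m"
    using powr_geometric_le_arithmetic[of t m s] assms by auto
  then have "t powr s * m powr (1 - s) * m powr (s - 1) \<le> (s * t + (1 - s) * m) * m powr (s - 1)"
    by (rule mult_right_mono) simp
  moreover have "m powr (1 - s) * m powr (s - 1) = 1"
    using assms by (simp flip: powr_add)
  moreover have "m * m powr (s - 1) = m powr s"
    using assms by (simp add: powr_mult_base)
  ultimately show ?thesis
    by (simp add: algebra_simps) (metis mult.assoc mult.commute)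
qed

lemma powr_ge_tangent_of_convex:
  fixes s m t :: real
  assumes "1 \<le> s" "0 < m" "0 \<le> t"
  shows "m powr s + s * m powr (s - 1) * (t - m) \<le> t powr s"
proof -
  have "(t powr s) powr (1/s) * (m powr s) powr (1 - 1/s) \<le> (1/s) * t powr s + (1 - 1/s) * m powr s"
    using powr_geometric_le_arithmetic[of "t powr s" "m powr s" "1/s"] assms by auto
  moreover have "(t powr s) powr (1/s) = t" "(m powr s) powr (1 - 1/s) = m powr (s - 1)"
    using assms by (simp_all add: powr_powr algebra_simps)
  ultimately have "s * (t * m powr (s - 1)) \<le> s * ((1/s) * t powr s + (1 - 1/s) * m powr s)"
    using assms by (intro mult_left_mono) auto
  moreover have "m * m powr (s - 1) = m powr s"
    using assms by (simp add: powr_mult_base)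
  ultimately show ?thesis
    using assms by (simp add: algebra_simps)
qed

lemma powr_midpoint_le:
  fixes k x y :: real
  assumes "1 \<le> k" "0 \<le> x" "0 \<le> y"
  shows "((x + y) / 2) powr k \<le> (x powr k + y powr k) / 2"
proof (cases "x + y = 0")
  case True
  then show ?thesis using assms by auto
next
  case False
  define m where "m = (x + y) / 2"
  have "0 < m" using False assms by (simp add: m_def)
  then have "m powr k + k * m powr (k - 1) * (x - m) \<le> x powr k"
    and "m powr k + k * m powr (k - 1) * (y - m) \<le> y powr k"
    using powr_ge_tangent_of_convex assms by blast+
  moreover have "(x - m) + (y - m) = 0" by (simp add: m_def)
  ultimately have "2 * m powr k \<le> x powr k + y powr k"
    by (smt (verit, best) distrib_left)
  then show ?thesis by (simp add: m_def)
qed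

lemma powr_le_mult_powr:
  fixes x m r :: real
  assumes "0 \<le> x" "x \<le> m" "1 \<le> r"
  shows "x powr r \<le> x * m powr (r - 1)"
proof (cases "x = 0")
  case True
  then show ?thesis by simp
next
  case False
  then have "x powr r = x * x powr (r - 1)"
    using assms by (simp add: powr_mult_base)
  also have "\<dots> \<le> x * m powr (r - 1)"
    using assms by (intro mult_left_mono powr_mono2) auto
  finally show ?thesis .
qed

lemma powr_superadditive:
  fixes y z r :: real
  assumes "0 \<le> y" "0 \<le> z" "1 \<le> r"
  shows "y powr r + z powr r \<le> (y + z) powr r"
proof -
  have "y powr r + z powr r \<le> y * (y + z) powr (r - 1) + z * (y + z) powr (r - 1)"
    using powr_le_mult_powr[of y "y + z" r] powr_le_mult_powr[of z "y + z" r] assms by auto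
  also have "\<dots> = (y + z) * (y + z) powr (r - 1)"
    by (simp add: algebra_simps)
  also have "\<dots> = (y + z) powr r"
    using assms by (simp add: powr_mult_base)
  finally show ?thesis .
qed

lemma two_powr_le:
  fixes r q :: real
  assumes "1 \<le> r" "r \<le> q"
  shows "2 powr ((r - 1) / q) \<le> r"
proof -
  have t: "0 \<le> (r - 1) / q" "(r - 1) / q \<le> 1"
    using assms by auto
  have "2 powr ((r - 1) / q) = 2 powr ((r - 1) / q) * 1 powr (1 - (r - 1) / q)"
    by simp
  also have "\<dots> \<le> (r - 1) / q * 2 + (1 - (r - 1) / q) * 1"
    using powr_geometric_le_arithmetic[of 2 1 "(r - 1) / q"] t by simp
  also have "\<dots> = 1 + (r - 1) / q"
    by (simp add: algebra_simps)
  also have "\<dots> \<le> 1 + (r - 1) / r"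
    using assms by (intro add_left_mono divide_left_mono) auto
  also have "\<dots> \<le> r"
    using assms mult_nonneg_nonneg[of "r - 1" "r - 1"] by (simp add: field_simps algebra_simps)
  finally show ?thesis .
qed

lemma Holder_inequality_sum:
  fixes u v :: "'a \<Rightarrow> real"
  assumes "finite A" "\<And>i. i \<in> A \<Longrightarrow> 0 \<le> u i" "\<And>i. i \<in> A \<Longrightarrow> 0 \<le> v i" "0 < t" "t < 1"
  shows "(\<Sum>i\<in>A. u i powr t * v i powr (1 - t)) \<le> (\<Sum>i\<in>A. u i) powr t * (\<Sum>i\<in>A. v i) powr (1 - t)"
proof -
  define U V where "U = (\<Sum>i\<in>A. u i)" and "V = (\<Sum>i\<in>A. v i)"
  have "0 \<le> U" "0 \<le> V"
    using assms by (auto simp: U_def V_def intro: sum_nonneg)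
  show ?thesis
  proof (cases "U = 0 \<or> V = 0")
    case True
    then have "\<forall>i\<in>A. u i = 0 \<or> v i = 0"
      using assms sum_nonneg_eq_0_iff[of A u] sum_nonneg_eq_0_iff[of A v] by (auto simp: U_def V_def)
    then show ?thesis
      by (simp add: sum.neutral)
  next
    case False
    with \<open>0 \<le> U\<close> \<open>0 \<le> V\<close> have "0 < U" "0 < V" by auto
    have "(\<Sum>i\<in>A. u i powr t * v i powr (1 - t))
        = (\<Sum>i\<in>A. U powr t * V powr (1 - t) * ((u i / U) powr t * (v i / V) powr (1 - t)))"
      using \<open>0 < U\<close> \<open>0 < V\<close> by (intro sum.cong) (simp_all add: powr_divide)
    also have "\<dots> \<le> (\<Sum>i\<in>A. U powr t * V powr (1 - t) * (t * (u i / U) + (1 - t) * (v i / V)))"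
      using assms \<open>0 < U\<close> \<open>0 < V\<close>
      by (intro sum_mono mult_left_mono powr_geometric_le_arithmetic) auto
    also have "\<dots> = U powr t * V powr (1 - t) * (t * (\<Sum>i\<in>A. u i) / U + (1 - t) * (\<Sum>i\<in>A. v i) / V)"
      by (simp add: sum_distrib_left sum.distrib sum_divide_distrib[symmetric] algebra_simps)
    also have "\<dots> = U powr t * V powr (1 - t)"
      using \<open>0 < U\<close> \<open>0 < V\<close> by (simp flip: U_def V_def)
    finally show ?thesis
      by (simp add: U_def V_def)
  qed
qed

lemma Holder_inequality_two:
  fixes a1 b1 a2 b2 t :: real
  assumes "0 \<le> a1" "0 \<le> b1" "0 \<le> a2" "0 \<le> b2" "0 < t" "t < 1"
  shows "a1 powr t * b1 powr (1 - t) + a2 powr t * b2 powr (1 - t) \<le> (a1 + a2) powr t * (b1 + b2) powr (1 - t)"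
  using Holder_inequality_sum[of UNIV "\<lambda>x. if x then a1 else a2" "\<lambda>x. if x then b1 else b2" t] assms
  by (simp add: UNIV_bool add.commute)

lemma scaled_root_le_of_interpolation:
  fixes Rp Rq D p q :: real
  assumes "0 \<le> Rp" "0 \<le> Rq" "0 < D" "0 < p" "p \<le> q"
    and interpolation: "Rp \<le> (q/p) powr p * (Rq powr (p/q) * D powr (1 - p/q))"
  shows "p * (Rp / D) powr (1 / p) \<le> q * (Rq / D) powr (1 / q)"
proof -
  have "Rp / D \<le> (q/p) powr p * (Rq powr (p/q) * D powr (1 - p/q)) / D"
    using interpolation assms by (simp add: divide_right_mono)
  also have "\<dots> = (q/p) powr p * (Rq / D) powr (p/q)"
    using assms by (simp add: powr_diff powr_divide)
  finally have "(Rp / D) powr (1/p) \<le> ((q/p) powr p * (Rq / D) powr (p/q)) powr (1/p)"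
    using assms by (intro powr_mono2) auto
  also have "\<dots> = q / p * (Rq / D) powr (1/q)"
    using assms by (simp add: powr_mult powr_powr)
  finally show ?thesis
    using assms by (simp add: field_simps)
qed

section \<open>Power means\<close>

definition power_mean :: "real \<Rightarrow> real \<Rightarrow> real \<Rightarrow> real" where
  "power_mean q x y = ((x powr q + y powr q) / 2) powr (1 / q)"

lemma power_mean_nonneg: "0 \<le> power_mean q x y"
  by (simp add: power_mean_def)

lemma power_mean_commute: "power_mean q x y = power_mean q y x"
  by (simp add: power_mean_def add.commute)

lemma power_mean_one: "0 \<le> x \<Longrightarrow> 0 \<le> y \<Longrightarrow> power_mean 1 x y = (x + y) / 2"
  by (simp add: power_mean_def)

lemma power_mean_powr:
  assumes "q \<noteq> 0"
  shows "power_mean q x y powr s = ((x powr q + y powr q) / 2) powr (s / q)"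
  by (simp add: power_mean_def powr_powr)

lemma power_mean_mono:
  fixes x y s q :: real
  assumes "0 \<le> x" "0 \<le> y" "0 < s" "s \<le> q"
  shows "power_mean s x y \<le> power_mean q x y"
proof -
  have "((x powr s + y powr s) / 2) powr (q / s) \<le> ((x powr s) powr (q / s) + (y powr s) powr (q / s)) / 2"
    using powr_midpoint_le[of "q / s" "x powr s" "y powr s"] assms by simp
  also have "\<dots> = (x powr q + y powr q) / 2"
    using assms by (simp add: powr_powr)
  finally have "(((x powr s + y powr s) / 2) powr (q / s)) powr (1 / q) \<le> ((x powr q + y powr q) / 2) powr (1 / q)"
    using assms by (intro powr_mono2) auto
  then show ?thesis
    using assms by (simp add: power_mean_def powr_powr)
qed

lemma max_le_power_mean:
  fixes x y q :: real
  assumes "0 \<le> x" "0 \<le> y" "0 < q"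
  shows "max x y \<le> 2 powr (1 / q) * power_mean q x y"
proof -
  have "max x y = (max x y powr q) powr (1 / q)"
    using assms by (simp add: powr_powr)
  also have "\<dots> \<le> (2 * ((x powr q + y powr q) / 2)) powr (1 / q)"
    using assms by (auto simp: max_def intro!: powr_mono2)
  also have "\<dots> = 2 powr (1 / q) * power_mean q x y"
    unfolding power_mean_def by (rule powr_mult)
  finally show ?thesis .
qed

text \<open>Since \<open>x powr r - y powr r\<close> is \<open>r * (x - y)\<close> times the mean of \<open>t powr (r - 1)\<close> over
  \<open>[y, x]\<close>, the next two lemmas are the Hermite-Hadamard bounds for this concave (\<open>r \<le> 2\<close>) and
  convex (\<open>r \<ge> 2\<close>) function.\<close>

lemma powr_diff_le_midpoint:
  fixes x y r :: real
  assumes "0 < y" "y \<le> x" "1 \<le> r" "r \<le> 2"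
  shows "x powr r - y powr r \<le> r * (x - y) * ((x + y) / 2) powr (r - 1)"
proof -
  define h where "h t = r * (t - y) * ((t + y) / 2) powr (r - 1) - t powr r" for t
  have "h y \<le> h x"
  proof (rule DERIV_nonneg_imp_nondecreasing[OF assms(2)])
    fix t assume "y \<le> t" "t \<le> x"
    define m where "m = (t + y) / 2"
    have "0 < t" "0 < m" using \<open>y \<le> t\<close> assms by (auto simp: m_def)
    have "DERIV h t :> r * m powr (r - 1) + (r - 1) * m powr (r - 2) / 2 * (r * (t - y)) - r * t powr (r - 1)"
      unfolding h_def m_def using \<open>0 < t\<close> assms
      by (auto intro!: derivative_eq_intros simp: field_simps)
    moreover have "t powr (r - 1) \<le> m powr (r - 1) + (r - 1) * m powr (r - 2) * (t - m)"
      using powr_le_tangent_of_concave[of "r - 1" m t] assms \<open>0 < t\<close> \<open>0 < m\<close> by simp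
    then have "0 \<le> r * (m powr (r - 1) + (r - 1) * m powr (r - 2) * (t - m) - t powr (r - 1))"
      using assms by simp
    then have "0 \<le> r * m powr (r - 1) + (r - 1) * m powr (r - 2) / 2 * (r * (t - y)) - r * t powr (r - 1)"
      by (simp add: m_def field_simps)
    ultimately show "\<exists>d. DERIV h t :> d \<and> 0 \<le> d" by blast
  qed
  then show ?thesis by (simp add: h_def algebra_simps)
qed

lemma powr_diff_le_endpoint_mean:
  fixes x y r :: real
  assumes "0 < y" "y \<le> x" "2 \<le> r"
  shows "x powr r - y powr r \<le> r * (x - y) * ((x powr (r - 1) + y powr (r - 1)) / 2)"
proof -
  define h where "h t = r / 2 * (t - y) * (t powr (r - 1) + y powr (r - 1)) - t powr r" for t
  have "h y \<le> h x"
  proof (rule DERIV_nonneg_imp_nondecreasing[OF assms(2)])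
    fix t assume "y \<le> t" "t \<le> x"
    then have "0 < t" using assms by auto
    have "DERIV h t :> r / 2 * (t powr (r - 1) + y powr (r - 1)) + (r - 1) * t powr (r - 2) * (r / 2 * (t - y)) - r * t powr (r - 1)"
      unfolding h_def using \<open>0 < t\<close>
      by (auto intro!: derivative_eq_intros simp: field_simps)
    moreover have "t powr (r - 1) + (r - 1) * t powr (r - 2) * (y - t) \<le> y powr (r - 1)"
      using powr_ge_tangent_of_convex[of "r - 1" t y] assms \<open>0 < t\<close> by simp
    then have "0 \<le> r / 2 * (y powr (r - 1) - (t powr (r - 1) + (r - 1) * t powr (r - 2) * (y - t)))"
      using assms by simp
    then have "0 \<le> r / 2 * (t powr (r - 1) + y powr (r - 1)) + (r - 1) * t powr (r - 2) * (r / 2 * (t - y)) - r * t powr (r - 1)"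
      using \<open>0 < t\<close> by (simp add: field_simps powr_mult_base[symmetric])
    ultimately show "\<exists>d. DERIV h t :> d \<and> 0 \<le> d" by blast
  qed
  then show ?thesis by (simp add: h_def algebra_simps)
qed

lemma powr_add_le_power_mean:
  fixes x y r q :: real
  assumes "0 \<le> x" "0 \<le> y" "1 \<le> r" "r \<le> q"
  shows "x powr r + y powr r \<le> r * (x + y) * power_mean q x y powr (r - 1)"
proof -
  define m where "m = max x y"
  have "x powr r + y powr r \<le> x * m powr (r - 1) + y * m powr (r - 1)"
    using powr_le_mult_powr[of x m r] powr_le_mult_powr[of y m r] assms by (auto simp: m_def)
  also have "\<dots> = (x + y) * m powr (r - 1)"
    by (simp add: algebra_simps)
  also have "\<dots> \<le> (x + y) * (r * power_mean q x y powr (r - 1))"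
  proof (rule mult_left_mono)
    have "m powr (r - 1) \<le> (2 powr (1 / q) * power_mean q x y) powr (r - 1)"
      using max_le_power_mean[of x y q] assms by (auto simp: m_def intro!: powr_mono2)
    also have "\<dots> = 2 powr ((r - 1) / q) * power_mean q x y powr (r - 1)"
      by (simp add: powr_mult powr_powr)
    also have "\<dots> \<le> r * power_mean q x y powr (r - 1)"
      using two_powr_le[OF assms(3,4)] by (intro mult_right_mono) auto
    finally show "m powr (r - 1) \<le> r * power_mean q x y powr (r - 1)" .
  qed (use assms in auto)
  finally show ?thesis
    by (simp add: algebra_simps)
qed

lemma powr_diff_le_power_mean:
  fixes x y r q :: real
  assumes "0 \<le> y" "y \<le> x" "1 \<le> r" "r \<le> q"
  shows "x powr r - y powr r \<le> r * (x - y) * power_mean q x y powr (r - 1)"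
proof (cases "y = 0")
  case True
  then show ?thesis
    using powr_add_le_power_mean[of x y r q] assms by simp
next
  case False
  then have "0 < y" using assms by simp
  have "0 \<le> r * (x - y)" using assms by simp
  show ?thesis
  proof (cases "r \<le> 2")
    case True
    have "x powr r - y powr r \<le> r * (x - y) * power_mean 1 x y powr (r - 1)"
      using powr_diff_le_midpoint[of y x r] \<open>0 < y\<close> assms True by (simp add: power_mean_one)
    also have "\<dots> \<le> r * (x - y) * power_mean q x y powr (r - 1)"
      using power_mean_mono[of x y 1 q] assms \<open>0 \<le> r * (x - y)\<close>
      by (auto intro!: mult_left_mono powr_mono2 simp: power_mean_nonneg)
    finally show ?thesis .
  next
    case False
    have "x powr r - y powr r \<le> r * (x - y) * power_mean (r - 1) x y powr (r - 1)"
      using powr_diff_le_endpoint_mean[of y x r] \<open>0 < y\<close> assms False by (simp add: power_mean_powr)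
    also have "\<dots> \<le> r * (x - y) * power_mean q x y powr (r - 1)"
      using power_mean_mono[of x y "r - 1" q] assms False \<open>0 \<le> r * (x - y)\<close>
      by (auto intro!: mult_left_mono powr_mono2 simp: power_mean_nonneg)
    finally show ?thesis .
  qed
qed

lemma abs_powr_diff_le_power_mean:
  fixes x y r q :: real
  assumes "0 \<le> x" "0 \<le> y" "1 \<le> r" "r \<le> q"
  shows "\<bar>x powr r - y powr r\<bar> \<le> r * \<bar>x - y\<bar> * power_mean q x y powr (r - 1)"
proof (cases "y \<le> x")
  case True
  moreover have "y powr r \<le> x powr r"
    using True assms by (intro powr_mono2) auto
  ultimately show ?thesis
    using powr_diff_le_power_mean[of y x r q] assms by simp
next
  case False
  moreover have "x powr r \<le> y powr r"
    using False assms by (intro powr_mono2) auto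
  ultimately show ?thesis
    using powr_diff_le_power_mean[of x y r q] assms by (simp add: power_mean_commute)
qed

lemma half_diff_powr_le:
  fixes x y r :: real
  assumes "0 \<le> x" "0 \<le> y" "1 \<le> r"
  shows "(\<bar>x - y\<bar> / 2) powr r \<le> \<bar>x powr r - y powr r\<bar> / 2"
proof -
  have ordered: "((b - a) / 2) powr r \<le> (b powr r - a powr r) / 2" if "0 \<le> a" "a \<le> b" for a b
  proof -
    have "((b - a) / 2) powr r = (b - a) powr r / 2 powr r"
      by (simp add: powr_divide)
    also have "\<dots> \<le> (b - a) powr r / 2"
      using assms powr_mono[of 1 r 2] by (intro divide_left_mono) auto
    also have "\<dots> \<le> (b powr r - a powr r) / 2"
      using powr_superadditive[of "b - a" a r] that assms by simp
    finally show ?thesis .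
  qed
  show ?thesis
  proof (cases "y \<le> x")
    case True
    then show ?thesis
      using ordered[of y x] powr_mono2[of r y x] assms by simp
  next
    case False
    then show ?thesis
      using ordered[of x y] powr_mono2[of r x y] assms by (simp add: abs_minus_commute)
  qed
qed

section \<open>Signed powers\<close>

definition signed_powr :: "real \<Rightarrow> real \<Rightarrow> real" where
  "signed_powr r x = \<bar>x\<bar> powr r * sgn x"

lemma signed_powr_one: "signed_powr 1 x = x"
  by (simp add: signed_powr_def abs_mult_sgn)

lemma signed_powr_sign: "s \<in> {-1, 1} \<Longrightarrow> s * signed_powr r x = signed_powr r (s * x)"
  by (auto simp: signed_powr_def sgn_minus)

lemma signed_powr_nonneg: "0 \<le> x \<Longrightarrow> signed_powr r x = x powr r"
  by (cases "x = 0") (auto simp: signed_powr_def)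

lemma signed_powr_neg: "x < 0 \<Longrightarrow> signed_powr r x = - (\<bar>x\<bar> powr r)"
  by (simp add: signed_powr_def)

lemma signed_powr_diff_cases:
  "(\<bar>a - b\<bar> = \<bar>\<bar>a\<bar> - \<bar>b\<bar>\<bar> \<and>
      \<bar>signed_powr r a - signed_powr r b\<bar> = \<bar>\<bar>a\<bar> powr r - \<bar>b\<bar> powr r\<bar>) \<or>
   (\<bar>a - b\<bar> = \<bar>a\<bar> + \<bar>b\<bar> \<and>
      \<bar>signed_powr r a - signed_powr r b\<bar> = \<bar>a\<bar> powr r + \<bar>b\<bar> powr r)"
proof -
  consider "0 \<le> a" "0 \<le> b" | "0 \<le> a" "b < 0" | "a < 0" "0 \<le> b" | "a < 0" "b < 0"
    by linarith
  then show ?thesis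
  proof cases
    case 1 then show ?thesis by (simp add: signed_powr_nonneg)
  next
    case 2 then show ?thesis by (simp add: signed_powr_nonneg signed_powr_neg)
  next
    case 3 then show ?thesis by (simp add: signed_powr_nonneg signed_powr_neg) (smt (verit) powr_ge_zero)
  next
    case 4 then show ?thesis by (simp add: signed_powr_neg abs_minus_commute)
  qed
qed

lemma signed_powr_half_diff_le:
  fixes a b r :: real
  assumes "1 \<le> r"
  shows "(\<bar>a - b\<bar> / 2) powr r \<le> \<bar>signed_powr r a - signed_powr r b\<bar> / 2"
  using signed_powr_diff_cases[of a b r]
proof (elim disjE conjE)
  assume "\<bar>a - b\<bar> = \<bar>\<bar>a\<bar> - \<bar>b\<bar>\<bar>"
    and "\<bar>signed_powr r a - signed_powr r b\<bar> = \<bar>\<bar>a\<bar> powr r - \<bar>b\<bar> powr r\<bar>"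
  then show ?thesis
    using half_diff_powr_le[OF abs_ge_zero abs_ge_zero assms, of a b] by (simp only:)
next
  assume "\<bar>a - b\<bar> = \<bar>a\<bar> + \<bar>b\<bar>"
    and "\<bar>signed_powr r a - signed_powr r b\<bar> = \<bar>a\<bar> powr r + \<bar>b\<bar> powr r"
  then show ?thesis
    using powr_midpoint_le[OF assms abs_ge_zero abs_ge_zero, of a b] by (simp only:)
qed

lemma abs_signed_powr_diff_le:
  fixes a b r q :: real
  assumes "1 \<le> r" "r \<le> q"
  shows "\<bar>signed_powr r a - signed_powr r b\<bar> \<le> r * \<bar>a - b\<bar> * power_mean q \<bar>a\<bar> \<bar>b\<bar> powr (r - 1)"
  using signed_powr_diff_cases[of a b r]
proof (elim disjE conjE)
  assume "\<bar>a - b\<bar> = \<bar>\<bar>a\<bar> - \<bar>b\<bar>\<bar>"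
    and "\<bar>signed_powr r a - signed_powr r b\<bar> = \<bar>\<bar>a\<bar> powr r - \<bar>b\<bar> powr r\<bar>"
  then show ?thesis
    using abs_powr_diff_le_power_mean[OF abs_ge_zero abs_ge_zero assms, of a b] by (simp only:)
next
  assume "\<bar>a - b\<bar> = \<bar>a\<bar> + \<bar>b\<bar>"
    and "\<bar>signed_powr r a - signed_powr r b\<bar> = \<bar>a\<bar> powr r + \<bar>b\<bar> powr r"
  then show ?thesis
    using powr_add_le_power_mean[OF abs_ge_zero abs_ge_zero assms, of a b] by (simp only:)
qed

lemma scaled_diff_powr_le_signed_powr:
  fixes a b p q :: real
  assumes "1 \<le> p" "p \<le> q"
  shows "2 powr (-q) * \<bar>a - b\<bar> powr q \<le> 2 powr (-p) * \<bar>signed_powr (q/p) a - signed_powr (q/p) b\<bar> powr p"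
proof -
  have "2 powr (-q) * \<bar>a - b\<bar> powr q = ((\<bar>a - b\<bar> / 2) powr (q/p)) powr p"
    using assms by (simp add: powr_powr powr_divide powr_minus_divide)
  also have "\<dots> \<le> (\<bar>signed_powr (q/p) a - signed_powr (q/p) b\<bar> / 2) powr p"
    using signed_powr_half_diff_le[of "q/p" a b] assms by (intro powr_mono2) auto
  also have "\<dots> = 2 powr (-p) * \<bar>signed_powr (q/p) a - signed_powr (q/p) b\<bar> powr p"
    by (simp add: powr_divide powr_minus_divide)
  finally show ?thesis .
qed

lemma weighted_signed_powr_diff_le:
  fixes w a b p q :: real
  assumes "0 \<le> w" "1 \<le> p" "p \<le> q"
  shows "w * \<bar>signed_powr (q/p) a - signed_powr (q/p) b\<bar> powr p
    \<le> (q/p) powr p * ((w * \<bar>a - b\<bar> powr q) powr (p/q) * (w * ((\<bar>a\<bar> powr q + \<bar>b\<bar> powr q) / 2)) powr (1 - p/q))"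
proof -
  define r t S where "r = q / p" and "t = p / q" and "S = (\<bar>a\<bar> powr q + \<bar>b\<bar> powr q) / 2"
  have "1 \<le> r" "r \<le> q"
    using assms by (auto simp: r_def field_simps)
  have "\<bar>signed_powr r a - signed_powr r b\<bar> powr p \<le> (r * \<bar>a - b\<bar> * power_mean q \<bar>a\<bar> \<bar>b\<bar> powr (r - 1)) powr p"
    using abs_signed_powr_diff_le[OF \<open>1 \<le> r\<close> \<open>r \<le> q\<close>] assms by (intro powr_mono2) auto
  also have "\<dots> = r powr p * (\<bar>a - b\<bar> powr q) powr t * S powr (1 - t)"
  proof -
    have "(r - 1) * p / q = 1 - t" "q * t = p"
      using assms by (simp_all add: r_def t_def field_simps)
    then show ?thesis
      using \<open>1 \<le> r\<close> assms by (simp add: S_def powr_mult powr_powr power_mean_powr)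
  qed
  finally have "w * \<bar>signed_powr r a - signed_powr r b\<bar> powr p \<le> w * (r powr p * (\<bar>a - b\<bar> powr q) powr t * S powr (1 - t))"
    using assms by (intro mult_left_mono) auto
  also have "\<dots> = r powr p * ((w powr t * w powr (1 - t)) * (\<bar>a - b\<bar> powr q) powr t * S powr (1 - t))"
    using assms by (simp flip: powr_add)
  also have "\<dots> = r powr p * ((w * \<bar>a - b\<bar> powr q) powr t * (w * S) powr (1 - t))"
    by (simp add: powr_mult algebra_simps)
  finally show ?thesis
    by (simp add: r_def S_def t_def)
qed

section \<open>Energies on a signed graph\<close>

lemma signed_graph_edgeD:
  assumes "signed_graph n adj sigma w mu" "(i, j) \<in> edges n adj"
  shows "0 < w i j" "sigma i j \<in> {-1, 1}" "w j i = w i j"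
proof -
  have "i \<in> {1..n}" "j \<in> {1..n}" "adj i j"
    using assms(2) by (auto simp: edges_def)
  with assms(1) show "0 < w i j" "sigma i j \<in> {-1, 1}" "w j i = w i j"
    unfolding signed_graph_def by (metis (no_types))+
qed

lemma finite_edges: "finite (edges n adj)"
  by (rule finite_subset[of _ "{1..n} \<times> {1..n}"]) (auto simp: edges_def)

lemma adjacent_pairs_eq_edges_Un_swap:
  assumes "signed_graph n adj sigma w mu"
  shows "{(i, j). i \<in> {1..n} \<and> j \<in> {1..n} \<and> adj i j} = edges n adj \<union> prod.swap ` edges n adj"
    (is "?A = ?B")
proof -
  have irrefl: "\<not> adj i i" if "i \<in> {1..n}" for i
    using assms that unfolding signed_graph_def by blast
  have adj_sym: "adj j i" if "i \<in> {1..n}" "j \<in> {1..n}" "adj i j" for i j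
    using assms that unfolding signed_graph_def by blast
  show ?thesis
  proof (intro equalityI subsetI)
    fix x assume "x \<in> ?A"
    then obtain i j where ij: "x = (i, j)" "i \<in> {1..n}" "j \<in> {1..n}" "adj i j"
      by auto
    with irrefl have "i < j \<or> j < i"
      by (cases i j rule: linorder_cases) auto
    then show "x \<in> ?B"
    proof
      assume "i < j"
      then show ?thesis
        using ij by (simp add: edges_def)
    next
      assume "j < i"
      then have "(j, i) \<in> edges n adj"
        using ij adj_sym[of i j] by (simp add: edges_def)
      then show ?thesis
        using ij(1) by (intro UnI2 rev_image_eqI[of "(j, i)"]) simp_all
    qed
  next
    fix x assume "x \<in> ?B"
    then show "x \<in> ?A"
    proof
      assume "x \<in> edges n adj"
      then show ?thesis
        by (auto simp: edges_def)
    next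
      assume "x \<in> prod.swap ` edges n adj"
      then obtain i j where "x = (j, i)" "(i, j) \<in> edges n adj"
        by auto
      then show ?thesis
        using adj_sym[of i j] by (simp add: edges_def)
    qed
  qed
qed

definition degree :: "nat \<Rightarrow> (nat \<Rightarrow> nat \<Rightarrow> bool) \<Rightarrow> (nat \<Rightarrow> nat \<Rightarrow> real) \<Rightarrow> nat \<Rightarrow> real" where
  "degree n adj w i = (\<Sum>j\<in>{j\<in>{1..n}. adj i j}. w i j)"

lemma degree_nonneg:
  assumes "signed_graph n adj sigma w mu" "i \<in> {1..n}"
  shows "0 \<le> degree n adj w i"
  using assms unfolding degree_def signed_graph_def by (intro sum_nonneg) (auto simp: less_imp_le)

lemma sum_edges_endpoints:
  fixes h :: "nat \<Rightarrow> real"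
  assumes "signed_graph n adj sigma w mu"
  shows "(\<Sum>(i,j)\<in>edges n adj. w i j * (h i + h j)) = (\<Sum>i\<in>{1..n}. degree n adj w i * h i)"
proof -
  define A where "A = {(i, j). i \<in> {1..n} \<and> j \<in> {1..n} \<and> adj i j}"
  have "edges n adj \<inter> prod.swap ` edges n adj = {}"
    by (auto simp: edges_def)
  then have "(\<Sum>(i,j)\<in>A. w i j * h i)
      = (\<Sum>(i,j)\<in>edges n adj. w i j * h i) + (\<Sum>(i,j)\<in>prod.swap ` edges n adj. w i j * h i)"
    unfolding A_def adjacent_pairs_eq_edges_Un_swap[OF assms]
    by (simp add: sum.union_disjoint finite_edges)
  also have "(\<Sum>(i,j)\<in>prod.swap ` edges n adj. w i j * h i) = (\<Sum>(i,j)\<in>edges n adj. w j i * h j)"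
    by (simp add: sum.reindex case_prod_unfold)
  also have "\<dots> = (\<Sum>(i,j)\<in>edges n adj. w i j * h j)"
    by (intro sum.cong refl) (auto dest: signed_graph_edgeD(3)[OF assms])
  finally have "(\<Sum>(i,j)\<in>A. w i j * h i) = (\<Sum>(i,j)\<in>edges n adj. w i j * (h i + h j))"
    by (simp add: sum.distrib[symmetric] case_prod_unfold algebra_simps)
  moreover have "A = Sigma {1..n} (\<lambda>i. {j\<in>{1..n}. adj i j})"
    by (auto simp: A_def)
  then have "(\<Sum>(i,j)\<in>A. w i j * h i) = (\<Sum>i\<in>{1..n}. degree n adj w i * h i)"
    by (simp add: sum.Sigma[symmetric] degree_def sum_distrib_right)
  ultimately show ?thesis
    by simp
qed

lemma edge_potential_le_Dconst:
  fixes h :: "nat \<Rightarrow> real"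
  assumes "signed_graph n adj sigma w mu" "\<And>i. i \<in> {1..n} \<Longrightarrow> 0 \<le> h i"
  shows "(\<Sum>(i,j)\<in>edges n adj. w i j * ((h i + h j) / 2)) + (\<Sum>i\<in>{1..n}. kappa i * h i)
    \<le> Dconst n adj w mu kappa * (\<Sum>i\<in>{1..n}. mu i * h i)"
proof -
  have mu: "0 < mu i" if "i \<in> {1..n}" for i
    using assms(1) that unfolding signed_graph_def by auto
  have "(\<Sum>(i,j)\<in>edges n adj. w i j * ((h i + h j) / 2)) = (\<Sum>i\<in>{1..n}. degree n adj w i * h i) / 2"
    unfolding sum_edges_endpoints[OF assms(1), symmetric] by (simp add: sum_divide_distrib case_prod_unfold)
  then have "(\<Sum>(i,j)\<in>edges n adj. w i j * ((h i + h j) / 2)) + (\<Sum>i\<in>{1..n}. kappa i * h i)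
      = (\<Sum>i\<in>{1..n}. degree n adj w i * h i / 2 + kappa i * h i)"
    by (simp add: sum.distrib sum_divide_distrib)
  also have "\<dots> = (\<Sum>i\<in>{1..n}. (2 * kappa i + degree n adj w i) / (2 * mu i) * (mu i * h i))"
  proof (rule sum.cong[OF refl])
    fix i assume "i \<in> {1..n}"
    then show "degree n adj w i * h i / 2 + kappa i * h i = (2 * kappa i + degree n adj w i) / (2 * mu i) * (mu i * h i)"
      using mu[of i] by (simp add: field_simps)
  qed
  also have "\<dots> \<le> (\<Sum>i\<in>{1..n}. Dconst n adj w mu kappa * (mu i * h i))"
    using assms unfolding Dconst_def signed_graph_def
    by (intro sum_mono mult_right_mono Max_ge) (auto simp: degree_def less_imp_le)
  finally show ?thesis
    by (simp add: sum_distrib_left)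
qed

lemma Dconst_nonneg:
  assumes "signed_graph n adj sigma w mu" "\<forall>i\<in>{1..n}. 0 \<le> kappa i" "0 < n"
  shows "0 \<le> Dconst n adj w mu kappa"
proof -
  have "1 \<in> {1..n}"
    using assms by simp
  then have "0 < mu 1" "0 \<le> kappa 1" "0 \<le> degree n adj w 1"
    using assms degree_nonneg[OF assms(1)] unfolding signed_graph_def by auto
  then have "0 \<le> (2 * kappa 1 + degree n adj w 1) / (2 * mu 1)"
    by simp
  also have "\<dots> \<le> Dconst n adj w mu kappa"
    using assms unfolding Dconst_def degree_def by (intro Max_ge) auto
  finally show ?thesis .
qed

definition edge_energy ::
  "nat \<Rightarrow> (nat \<Rightarrow> nat \<Rightarrow> bool) \<Rightarrow> (nat \<Rightarrow> nat \<Rightarrow> real) \<Rightarrow> (nat \<Rightarrow> nat \<Rightarrow> real) \<Rightarrow> real \<Rightarrow> (nat \<Rightarrow> real) \<Rightarrow> real"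
  where "edge_energy n adj sigma w p f = (\<Sum>(i,j)\<in>edges n adj. w i j * \<bar>f i - sigma i j * f j\<bar> powr p)"

definition potential_energy :: "nat \<Rightarrow> (nat \<Rightarrow> real) \<Rightarrow> real \<Rightarrow> (nat \<Rightarrow> real) \<Rightarrow> real" where
  "potential_energy n kappa p f = (\<Sum>i\<in>{1..n}. kappa i * \<bar>f i\<bar> powr p)"

lemma edge_energy_nonneg:
  "signed_graph n adj sigma w mu \<Longrightarrow> 0 \<le> edge_energy n adj sigma w p f"
  unfolding edge_energy_def by (intro sum_nonneg) (auto dest: signed_graph_edgeD)

lemma potential_energy_nonneg:
  "\<forall>i\<in>{1..n}. 0 \<le> kappa i \<Longrightarrow> 0 \<le> potential_energy n kappa p f"
  unfolding potential_energy_def by (intro sum_nonneg) auto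

lemma rayleigh_on_sphere:
  "f \<in> sphere_p n mu p \<Longrightarrow>
    rayleigh n adj sigma w mu kappa p f = edge_energy n adj sigma w p f + potential_energy n kappa p f"
  by (simp add: rayleigh_def sphere_p_def edge_energy_def potential_energy_def)

lemma phi_eq_signed_powr: "phi q p f i = signed_powr (q / p) (f i)"
  by (simp add: phi_def signed_powr_def)

lemma phi_self: "p \<noteq> 0 \<Longrightarrow> phi p p f = f"
  by (simp add: fun_eq_iff phi_eq_signed_powr signed_powr_one)

lemma abs_phi_powr: "p \<noteq> 0 \<Longrightarrow> \<bar>phi q p f i\<bar> powr p = \<bar>f i\<bar> powr q"
  by (cases "f i = 0") (simp_all add: phi_def abs_mult powr_powr)

lemma phi_in_sphere: "p \<noteq> 0 \<Longrightarrow> f \<in> sphere_p n mu q \<Longrightarrow> phi q p f \<in> sphere_p n mu p"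
  by (simp add: sphere_p_def abs_phi_powr)

lemma potential_energy_phi: "p \<noteq> 0 \<Longrightarrow> potential_energy n kappa p (phi q p f) = potential_energy n kappa q f"
  by (simp add: potential_energy_def abs_phi_powr)

lemma abs_phi_edge_diff:
  "s \<in> {-1, 1} \<Longrightarrow>
    \<bar>phi q p f i - s * phi q p f j\<bar> = \<bar>signed_powr (q / p) (f i) - signed_powr (q / p) (s * f j)\<bar>"
  by (simp add: phi_eq_signed_powr signed_powr_sign)

lemma edge_energy_phi_le:
  assumes "signed_graph n adj sigma w mu" "1 \<le> p" "p < q"
  shows "edge_energy n adj sigma w p (phi q p f)
    \<le> (q/p) powr p * (edge_energy n adj sigma w q f powr (p/q)
        * (\<Sum>(i,j)\<in>edges n adj. w i j * ((\<bar>f i\<bar> powr q + \<bar>f j\<bar> powr q) / 2)) powr (1 - p/q))"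
proof -
  define t where "t = p / q"
  have "0 < t" "t < 1"
    using assms by (auto simp: t_def)
  have "edge_energy n adj sigma w p (phi q p f)
      \<le> (\<Sum>(i,j)\<in>edges n adj. (q/p) powr p * ((w i j * \<bar>f i - sigma i j * f j\<bar> powr q) powr t
            * (w i j * ((\<bar>f i\<bar> powr q + \<bar>f j\<bar> powr q) / 2)) powr (1 - t)))"
    unfolding edge_energy_def
  proof (rule sum_mono, clarify)
    fix i j assume "(i, j) \<in> edges n adj"
    with assms(1) have "0 < w i j" "sigma i j \<in> {-1, 1}"
      by (auto dest: signed_graph_edgeD)
    then show "w i j * \<bar>phi q p f i - sigma i j * phi q p f j\<bar> powr p
        \<le> (q/p) powr p * ((w i j * \<bar>f i - sigma i j * f j\<bar> powr q) powr t
            * (w i j * ((\<bar>f i\<bar> powr q + \<bar>f j\<bar> powr q) / 2)) powr (1 - t))"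
      using weighted_signed_powr_diff_le[of "w i j" p q "f i" "sigma i j * f j"] assms
      by (auto simp: abs_phi_edge_diff abs_mult t_def)
  qed
  also have "\<dots> = (q/p) powr p * (\<Sum>(i,j)\<in>edges n adj. (w i j * \<bar>f i - sigma i j * f j\<bar> powr q) powr t
            * (w i j * ((\<bar>f i\<bar> powr q + \<bar>f j\<bar> powr q) / 2)) powr (1 - t))"
    by (simp add: sum_distrib_left case_prod_unfold)
  also have "\<dots> \<le> (q/p) powr p * (edge_energy n adj sigma w q f powr t
        * (\<Sum>(i,j)\<in>edges n adj. w i j * ((\<bar>f i\<bar> powr q + \<bar>f j\<bar> powr q) / 2)) powr (1 - t))"
    unfolding edge_energy_def case_prod_unfold
    using \<open>0 < t\<close> \<open>t < 1\<close> assms(1)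
    by (intro mult_left_mono Holder_inequality_sum finite_edges)
      (auto dest: signed_graph_edgeD intro!: mult_nonneg_nonneg)
  finally show ?thesis
    by (simp add: t_def)
qed

lemma rayleigh_phi_lower_bound:
  assumes "signed_graph n adj sigma w mu" "\<forall>i\<in>{1..n}. 0 \<le> kappa i"
    and "1 \<le> p" "p \<le> q" "f \<in> sphere_p n mu q"
  shows "2 powr (-q) * rayleigh n adj sigma w mu kappa q f
    \<le> 2 powr (-p) * rayleigh n adj sigma w mu kappa p (phi q p f)"
proof -
  have "p \<noteq> 0" using assms by simp
  have "2 powr (-q) * edge_energy n adj sigma w q f \<le> 2 powr (-p) * edge_energy n adj sigma w p (phi q p f)"
    unfolding edge_energy_def sum_distrib_left
  proof (rule sum_mono, clarify)
    fix i j assume "(i, j) \<in> edges n adj"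
    with assms(1) have "0 < w i j" "sigma i j \<in> {-1, 1}"
      by (auto dest: signed_graph_edgeD)
    then show "2 powr (-q) * (w i j * \<bar>f i - sigma i j * f j\<bar> powr q)
        \<le> 2 powr (-p) * (w i j * \<bar>phi q p f i - sigma i j * phi q p f j\<bar> powr p)"
      using scaled_diff_powr_le_signed_powr[OF assms(3,4), of "f i" "sigma i j * f j"]
        mult_left_mono[of _ _ "w i j"]
      by (simp add: abs_phi_edge_diff mult.left_commute)
  qed
  moreover have "2 powr (-q) * potential_energy n kappa q f \<le> 2 powr (-p) * potential_energy n kappa q f"
    using potential_energy_nonneg[OF assms(2)] assms by (intro mult_right_mono) auto
  ultimately show ?thesis
    using assms \<open>p \<noteq> 0\<close>
    by (simp add: rayleigh_on_sphere phi_in_sphere potential_energy_phi distrib_left)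
qed

lemma rayleigh_phi_interpolation:
  assumes "signed_graph n adj sigma w mu" "\<forall>i\<in>{1..n}. 0 \<le> kappa i"
    and "1 \<le> p" "p < q" "f \<in> sphere_p n mu q"
  shows "rayleigh n adj sigma w mu kappa p (phi q p f)
    \<le> (q/p) powr p * (rayleigh n adj sigma w mu kappa q f powr (p/q) * Dconst n adj w mu kappa powr (1 - p/q))"
proof -
  define t where "t = p / q"
  define E V K where "E = edge_energy n adj sigma w q f"
    and "V = (\<Sum>(i,j)\<in>edges n adj. w i j * ((\<bar>f i\<bar> powr q + \<bar>f j\<bar> powr q) / 2))"
    and "K = potential_energy n kappa q f"
  have "p \<noteq> 0" "0 < t" "t < 1"
    using assms by (auto simp: t_def)
  have "0 \<le> E" "0 \<le> V" "0 \<le> K"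
    using assms edge_energy_nonneg potential_energy_nonneg unfolding E_def V_def K_def
    by (auto intro!: sum_nonneg dest: signed_graph_edgeD)
  have "1 \<le> (q/p) powr p"
    using assms by (intro ge_one_powr_ge_zero) auto
  have "K \<le> (q/p) powr p * (K powr t * K powr (1 - t))"
    using mult_right_mono[OF \<open>1 \<le> (q/p) powr p\<close> \<open>0 \<le> K\<close>] \<open>0 \<le> K\<close> by (simp flip: powr_add)
  moreover have "edge_energy n adj sigma w p (phi q p f) \<le> (q/p) powr p * (E powr t * V powr (1 - t))"
    using edge_energy_phi_le[OF assms(1,3,4)] by (simp add: E_def V_def t_def)
  ultimately have "rayleigh n adj sigma w mu kappa p (phi q p f)
      \<le> (q/p) powr p * (E powr t * V powr (1 - t) + K powr t * K powr (1 - t))"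
    using assms \<open>p \<noteq> 0\<close>
    by (simp add: rayleigh_on_sphere phi_in_sphere potential_energy_phi K_def distrib_left)
  also have "\<dots> \<le> (q/p) powr p * ((E + K) powr t * (V + K) powr (1 - t))"
    using \<open>0 \<le> E\<close> \<open>0 \<le> V\<close> \<open>0 \<le> K\<close> \<open>0 < t\<close> \<open>t < 1\<close>
    by (intro mult_left_mono Holder_inequality_two) auto
  also have "\<dots> \<le> (q/p) powr p * ((E + K) powr t * Dconst n adj w mu kappa powr (1 - t))"
  proof -
    have "V + K \<le> Dconst n adj w mu kappa"
      using edge_potential_le_Dconst[OF assms(1), of "\<lambda>i. \<bar>f i\<bar> powr q" kappa] assms(5)
      by (simp add: V_def K_def potential_energy_def sphere_p_def)
    then show ?thesis
      using \<open>0 \<le> E\<close> \<open>0 \<le> V\<close> \<open>0 \<le> K\<close> \<open>t < 1\<close>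
      by (intro mult_left_mono powr_mono2) auto
  qed
  finally show ?thesis
    using assms by (simp add: rayleigh_on_sphere E_def K_def t_def)
qed

lemma rayleigh_phi_root_bound:
  assumes "signed_graph n adj sigma w mu" "\<forall>i\<in>{1..n}. 0 \<le> kappa i"
    and "1 \<le> p" "p \<le> q" "f \<in> sphere_p n mu q"
  shows "p * (rayleigh n adj sigma w mu kappa p (phi q p f) / Dconst n adj w mu kappa) powr (1 / p)
    \<le> q * (rayleigh n adj sigma w mu kappa q f / Dconst n adj w mu kappa) powr (1 / q)"
proof (cases "p = q")
  case True
  then show ?thesis
    using assms by (simp add: phi_self)
next
  case False
  have "0 < n"
    using assms(5) by (cases n) (auto simp: sphere_p_def)
  then have "0 \<le> Dconst n adj w mu kappa"
    using Dconst_nonneg assms by blast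
  moreover have "0 \<le> rayleigh n adj sigma w mu kappa p (phi q p f)" "0 \<le> rayleigh n adj sigma w mu kappa q f"
    using assms edge_energy_nonneg potential_energy_nonneg
    by (simp_all add: rayleigh_on_sphere phi_in_sphere add_nonneg_nonneg)
  \<comment> \<open>if \<open>Dconst\<close> vanishes, both sides are \<open>0\<close> because \<open>x / 0 = 0\<close>\<close>
  ultimately show ?thesis
    using scaled_root_le_of_interpolation rayleigh_phi_interpolation[of n adj sigma w mu kappa p q f]
      assms False
    by (cases "Dconst n adj w mu kappa = 0") auto
qed

theorem lemma3p4:
  fixes n :: nat and adj :: "nat \<Rightarrow> nat \<Rightarrow> bool" and sigma w :: "nat \<Rightarrow> nat \<Rightarrow> real"
    and mu kappa f :: "nat \<Rightarrow> real" and p q :: real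
  assumes "signed_graph n adj sigma w mu"
    and "\<forall>i\<in>{1..n}. kappa i \<ge> 0"
    and "1 \<le> p" and "p \<le> q"
    and "f \<in> sphere_p n mu q"
  shows "(2 powr (-p) * rayleigh n adj sigma w mu kappa p (phi q p f)
           \<ge> 2 powr (-q) * rayleigh n adj sigma w mu kappa q f) \<and>
         (p * (rayleigh n adj sigma w mu kappa p (phi q p f) / Dconst n adj w mu kappa) powr (1 / p)
           \<le> q * (rayleigh n adj sigma w mu kappa q f / Dconst n adj w mu kappa) powr (1 / q))"
  using rayleigh_phi_lower_bound[OF assms] rayleigh_phi_root_bound[OF assms] by simp

end
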